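(* Let $H=(U,(A_1,\dots,A_m))$ be a harmonic set system and suppose there exist $i<j$ with $A_i=A_j$. Then $A_1=A_2=\cdots=A_m$, or $(m,i,j)=(3,1,3)$.
   Context: For $I\subseteq[m]$, $H_I=\bigcap_{i\in I}A_i$ ($=U$ if $I=\emptyset$). The run decomposition of a finite set $I$ of positive integers is the partition of sizes, in nonincreasing order, of the maximal runs of consecutive integers in $I$. $H$ is harmonic if $|H_I|=|H_J|$ whenever $I,J\subseteq[m]$ have the same run decomposition. *)

theory Defs
  imports Main "HOL-Library.Multiset"
begin

definition runs :: "nat set \<Rightarrow> nat set set" where
  "runs I = {{a..b} | a b. a \<le> b \<and> {a..b} \<subseteq> I
                      \<and> (\<forall>k. Suc k = a \<longrightarrow> k \<notin> I) \<and> Suc b \<notin> I}"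

definition run_decomposition :: "nat set \<Rightarrow> nat multiset" where
  "run_decomposition I = image_mset card (mset_set (runs I))"

definition HI :: "'a set \<Rightarrow> (nat \<Rightarrow> 'a set) \<Rightarrow> nat set \<Rightarrow> 'a set" where
  "HI U A I = (if I = {} then U else (\<Inter>i\<in>I. A i))"

definition set_system :: "'a set \<Rightarrow> nat \<Rightarrow> (nat \<Rightarrow> 'a set) \<Rightarrow> bool" where
  "set_system U m A \<longleftrightarrow> finite U \<and> (\<forall>i\<in>{1..m}. A i \<subseteq> U)"

definition harmonic :: "'a set \<Rightarrow> nat \<Rightarrow> (nat \<Rightarrow> 'a set) \<Rightarrow> bool" where
  "harmonic U m A \<longleftrightarrow>
     (\<forall>I J. I \<subseteq> {1..m} \<and> J \<subseteq> {1..m} \<and> run_decomposition I = run_decomposition J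
        \<longrightarrow> card (HI U A I) = card (HI U A J))"

end

theory Submission
  imports Defs
begin

text \<open>
  Singletons all have run decomposition \<open>{#1#}\<close>, so the sets \<open>A\<^sub>k\<close> of a harmonic system
  have a common size.  A pair \<open>{k, l}\<close> has run decomposition \<open>{#2#}\<close> if \<open>l = k + 1\<close> and
  \<open>{#1, 1#}\<close> otherwise.  Hence \<open>A\<^sub>i = A\<^sub>j\<close> forces \<open>|A\<^sub>k \<inter> A\<^sub>l| = |A\<^sub>k| = |A\<^sub>l|\<close>, i.e. \<open>A\<^sub>k = A\<^sub>l\<close>,
  for every pair \<open>{k, l}\<close> of the same kind as \<open>{i, j}\<close>.  Adjacent pairs connect all of
  \<open>[m]\<close>, and so do non-adjacent pairs unless \<open>m \<le> 3\<close>; for \<open>m = 3\<close> the only non-adjacent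
  pair is \<open>{1, 3}\<close>.
\<close>

lemma runs_singleton: "runs {k} = {{k}}"
proof (rule set_eqI, rule iffI)
  fix X assume "X \<in> runs {k}"
  then obtain a b where X: "X = {a..b}" "a \<le> b" "{a..b} \<subseteq> {k}"
    unfolding runs_def by blast
  then have "a \<in> {k}" "b \<in> {k}" by auto
  with X show "X \<in> {{k}}" by auto
next
  have "{k..k} \<in> runs {k}"
    unfolding runs_def by (intro CollectI exI[of _ k]) auto
  then show "X \<in> runs {k}" if "X \<in> {{k}}" for X
    using that by auto
qed

lemma runs_consecutive_pair: "runs {k, Suc k} = {{k..Suc k}}"
proof -
  have "a = k \<and> b = Suc k"
    if "{a..b} \<subseteq> {k, Suc k}" "a \<le> b"
       "\<forall>k'. Suc k' = a \<longrightarrow> k' \<notin> {k, Suc k}" "Suc b \<notin> {k, Suc k}" for a b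
  proof -
    have "a \<in> {k, Suc k}" "b \<in> {k, Suc k}" using that(1,2) by auto
    then show ?thesis using that(3,4) by auto
  qed
  then show ?thesis
    unfolding runs_def by (intro set_eqI iffI) (blast, force)
qed

lemma runs_distant_pair:
  assumes "Suc k < l"
  shows "runs {k, l} = {{k}, {l}}"
proof (rule set_eqI, rule iffI)
  fix X assume "X \<in> runs {k, l}"
  then obtain a b where X: "X = {a..b}" "a \<le> b" "{a..b} \<subseteq> {k, l}"
    unfolding runs_def by blast
  then have a: "a \<in> {k, l}" by auto
  have "\<not> Suc a \<le> b"
  proof
    assume "Suc a \<le> b"
    then have "Suc a \<in> {a..b}" by simp
    then have "Suc a \<in> {k, l}" using X(3) by blast
    with a assms show False by auto
  qed
  with X a show "X \<in> {{k}, {l}}" by auto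
next
  have "{k..k} \<in> runs {k, l}"
    unfolding runs_def using assms by (intro CollectI exI[of _ k]) auto
  moreover have "{l..l} \<in> runs {k, l}"
    unfolding runs_def using assms by (intro CollectI exI[of _ l]) auto
  ultimately show "X \<in> runs {k, l}" if "X \<in> {{k}, {l}}" for X
    using that by auto
qed

lemma run_decomposition_singleton: "run_decomposition {k} = {#1#}"
  unfolding run_decomposition_def runs_singleton by simp

lemma run_decomposition_consecutive_pair: "run_decomposition {k, Suc k} = {#2#}"
  unfolding run_decomposition_def runs_consecutive_pair by simp

lemma run_decomposition_distant_pair:
  assumes "Suc k < l"
  shows "run_decomposition {k, l} = {#1, 1#}"
proof -
  have "{k} \<noteq> {l}" using assms by auto
  then show ?thesis
    by (simp add: run_decomposition_def runs_distant_pair[OF assms])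
qed

lemma card_Int_eq_imp_eq:
  assumes "finite X" "finite Y" "card (X \<inter> Y) = card X" "card X = card Y"
  shows "X = Y"
proof -
  have "X \<inter> Y = X" using card_subset_eq[OF assms(1) _ assms(3)] by blast
  moreover have "X \<inter> Y = Y" using card_subset_eq[OF assms(2)] assms(3,4) by auto
  ultimately show ?thesis by simp
qed

lemma harmonicD:
  assumes "harmonic U m A" "I \<subseteq> {1..m}" "J \<subseteq> {1..m}"
    and "run_decomposition I = run_decomposition J"
  shows "card (HI U A I) = card (HI U A J)"
  using assms unfolding harmonic_def by blast

lemma harmonic_card_eq:
  assumes "harmonic U m A" "k \<in> {1..m}" "l \<in> {1..m}"
  shows "card (A k) = card (A l)"
proof -
  have "card (HI U A {k}) = card (HI U A {l})"
    using assms by (intro harmonicD) (auto simp: run_decomposition_singleton)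
  then show ?thesis by (simp add: HI_def)
qed

lemma harmonic_pair_eq:
  assumes "set_system U m A" "harmonic U m A"
    and "{i, j} \<subseteq> {1..m}" "{k, l} \<subseteq> {1..m}"
    and "run_decomposition {k, l} = run_decomposition {i, j}"
    and "A i = A j"
  shows "A k = A l"
proof (rule card_Int_eq_imp_eq)
  show "finite (A k)" "finite (A l)"
    using assms(1,4) unfolding set_system_def by (meson finite_subset insert_subset)+
  have "card (HI U A {k, l}) = card (HI U A {i, j})"
    using harmonicD[OF assms(2,4,3,5)] .
  then have "card (A k \<inter> A l) = card (A i)"
    using assms(6) by (simp add: HI_def)
  also have "\<dots> = card (A k)"
    using harmonic_card_eq[OF assms(2)] assms(3,4) by auto
  finally show "card (A k \<inter> A l) = card (A k)" .
  show "card (A k) = card (A l)"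
    using harmonic_card_eq[OF assms(2)] assms(4) by auto
qed

lemma all_eq_if_consecutive_eq:
  assumes "\<And>k. 1 \<le> k \<Longrightarrow> Suc k \<le> m \<Longrightarrow> A k = A (Suc k)"
  shows "\<forall>k\<in>{1..m}. \<forall>l\<in>{1..m}. A k = A l"
proof -
  have step: "Suc k \<le> m \<Longrightarrow> A (Suc k) = A 1" for k
  proof (induction k)
    case (Suc k)
    then have "A (Suc k) = A 1" by simp
    with Suc.prems assms[of "Suc k"] show ?case by simp
  qed simp
  have "A k = A 1" if "k \<in> {1..m}" for k
    using that step[of "k - 1"] by simp
  then show ?thesis by metis
qed

lemma all_eq_if_distant_eq:
  assumes "4 \<le> m"
    and "\<And>k l. 1 \<le> k \<Longrightarrow> Suc k < l \<Longrightarrow> l \<le> m \<Longrightarrow> A k = A l"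
  shows "\<forall>k\<in>{1..m}. \<forall>l\<in>{1..m}. A k = A l"
proof -
  have "A k = A 1" if k: "k \<in> {1..m}" for k
  proof -
    consider "k = 1" | "k = 2" | "3 \<le> k" using k by force
    then show ?thesis
    proof cases
      case 2
      then show ?thesis using assms(2)[of 2 4] assms(2)[of 1 4] assms(1) by simp
    next
      case 3
      then show ?thesis using assms(2)[of 1 k] k by simp
    qed simp
  qed
  then show ?thesis by metis
qed

theorem proposition5p1:
  fixes U :: "'a set" and m :: nat and A :: "nat \<Rightarrow> 'a set" and i j :: nat
  assumes "set_system U m A"
    and "harmonic U m A"
    and "1 \<le> i" and "i < j" and "j \<le> m"
    and "A i = A j"
  shows "(\<forall>k\<in>{1..m}. \<forall>l\<in>{1..m}. A k = A l) \<or> (m = 3 \<and> i = 1 \<and> j = 3)"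
proof -
  have ij: "{i, j} \<subseteq> {1..m}" using assms(3-5) by auto
  note pair_eq = harmonic_pair_eq[OF assms(1,2) ij _ _ assms(6)]
  show ?thesis
  proof (cases "j = Suc i")
    case True
    then have "A k = A (Suc k)" if "1 \<le> k" "Suc k \<le> m" for k
      using that by (intro pair_eq) (auto simp: run_decomposition_consecutive_pair)
    then show ?thesis using all_eq_if_consecutive_eq by blast
  next
    case False
    then have "Suc i < j" using assms(4) by simp
    then have "A k = A l" if "1 \<le> k" "Suc k < l" "l \<le> m" for k l
      using that by (intro pair_eq) (auto simp: run_decomposition_distant_pair)
    moreover have "4 \<le> m \<or> (m = 3 \<and> i = 1 \<and> j = 3)"
      using \<open>Suc i < j\<close> assms(3,5) by auto
    ultimately show ?thesis using all_eq_if_distant_eq by blast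
  qed
qed

end
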